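(* Let $\mathbb{X}$ be a reflexive Kadets-Klee real Banach space and $\mathbb{Y}$ a smooth real Banach space (both of dimension greater than $1$). Let $T\in\mathbb{K}(\mathbb{X},\mathbb{Y})$ be nonzero. Then $T$ is a smooth point of $\mathbb{K}(\mathbb{X},\mathbb{Y})$ if and only if there exists $x_0\in S_{\mathbb{X}}$ such that for every $\epsilon>0$ there exists $\delta(\epsilon)>0$ such that for every $0<\delta\le\delta(\epsilon)$ (with $\delta<\|T\|$), \[M_T(\delta)\subseteq B(x_0,\epsilon)\cup B(-x_0,\epsilon).\] Moreover, the "if" direction holds without assuming that $\mathbb{X}$ is Kadets-Klee.
   Context: $\mathbb{K}(\mathbb{X},\mathbb{Y})$ is the Banach space of compact linear operators from $\mathbb{X}$ to $\mathbb{Y}$ with the operator norm. $S_{\mathbb{X}}$ is the unit sphere; $B(x,r)$ is the open ball of centre $x$ and radius $r$. A nonzero element $x$ of a Banach space $\mathbb{Z}$ is a smooth point if there is a unique $f\in\mathbb{Z}^*$ with $\|f\|=1$ and $f(x)=\|x\|$; a Banach space is smooth if every nonzero point is smooth. $\mathbb{X}$ is Kadets-Klee if whenever $x_n\to x$ weakly and $\|x_n\|\to\|x\|$, then $\|x_n-x\|\to0$. For nonzero $T$ and $0<\delta<\|T\|$, $M_T(\delta)=\{x\in S_{\mathbb{X}}:\|Tx\|>\|T\|-\delta\}$. *)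

theory Defs
  imports "HOL-Analysis.Analysis"
begin

definition support_functional_on :: "'c::real_normed_vector set \<Rightarrow> 'c \<Rightarrow> ('c \<Rightarrow> real) \<Rightarrow> bool" where
  "support_functional_on Z x f \<longleftrightarrow>
     (\<forall>u\<in>Z. \<forall>v\<in>Z. f (u + v) = f u + f v) \<and>
     (\<forall>c. \<forall>u\<in>Z. f (c *\<^sub>R u) = c * f u) \<and>
     (\<forall>u\<in>Z. \<bar>f u\<bar> \<le> norm u) \<and>
     f x = norm x"

definition smooth_point_in :: "'c::real_normed_vector set \<Rightarrow> 'c \<Rightarrow> bool" where
  "smooth_point_in Z x \<longleftrightarrow> x \<in> Z \<and> x \<noteq> 0 \<and>
     (\<exists>f. support_functional_on Z x f) \<and>
     (\<forall>f g. support_functional_on Z x f \<and> support_functional_on Z x g \<longrightarrow> (\<forall>z\<in>Z. f z = g z))"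

definition smooth_space :: "'c::real_normed_vector itself \<Rightarrow> bool" where
  "smooth_space _ \<longleftrightarrow> (\<forall>y::'c. y \<noteq> 0 \<longrightarrow> smooth_point_in UNIV y)"

definition reflexive_space :: "'c::real_normed_vector itself \<Rightarrow> bool" where
  "reflexive_space _ \<longleftrightarrow>
     (\<forall>\<phi> :: ('c \<Rightarrow>\<^sub>L real) \<Rightarrow>\<^sub>L real. \<exists>x::'c. \<forall>f. blinfun_apply \<phi> f = blinfun_apply f x)"

definition weak_conv :: "(nat \<Rightarrow> 'c::real_normed_vector) \<Rightarrow> 'c \<Rightarrow> bool" where
  "weak_conv xs x \<longleftrightarrow> (\<forall>f :: 'c \<Rightarrow>\<^sub>L real. (\<lambda>n. blinfun_apply f (xs n)) \<longlonglongrightarrow> blinfun_apply f x)"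

definition kadets_klee :: "'c::real_normed_vector itself \<Rightarrow> bool" where
  "kadets_klee _ \<longleftrightarrow> (\<forall>(xs :: nat \<Rightarrow> 'c) x.
     weak_conv xs x \<and> (\<lambda>n. norm (xs n)) \<longlonglongrightarrow> norm x \<longrightarrow> (\<lambda>n. norm (xs n - x)) \<longlonglongrightarrow> 0)"

definition dim_gt_one :: "'c::real_vector itself \<Rightarrow> bool" where
  "dim_gt_one _ \<longleftrightarrow> \<not> (\<exists>e::'c. span {e} = UNIV)"

definition compact_ops :: "('a::real_normed_vector \<Rightarrow>\<^sub>L 'b::real_normed_vector) set" where
  "compact_ops = {T. compact (closure (blinfun_apply T ` cball 0 1))}"

definition M_set :: "('a::real_normed_vector \<Rightarrow>\<^sub>L 'b::real_normed_vector) \<Rightarrow> real \<Rightarrow> 'a set" where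
  "M_set T \<delta> = {x. norm x = 1 \<and> norm (blinfun_apply T x) > norm T - \<delta>}"

end

theory Submission
  imports Defs
begin

text \<open>If the maximizing sets \<open>M_T(\<delta>)\<close> shrink to \<open>{x0, -x0}\<close>, then T attains its norm at
  \<open>x0\<close> and every support functional F of T is squeezed by the evaluation functional
  \<open>S \<mapsto> g (S x0)\<close>, g the unique support functional at the smooth point \<open>T x0\<close>: perturbing T to
  \<open>T + t S\<close> and following almost-norming vectors of the perturbation gives \<open>F S \<le> g (S x0)\<close>.
  Conversely, at a smooth T, maximizing sequences have subsequences that converge in every
  functional (smoothness), hence weakly (reflexivity) and then in norm (Kadets-Klee) to a
  norming vector, and testing the unique support functional on rank-one operators shows that
  the norming vectors are exactly \<open>\<pm>x0\<close>. Support functionals come from the Hahn-Banach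
  theorem, obtained by Zorn's lemma.\<close>

section \<open>Hahn-Banach extension\<close>

definition linear_on :: "'v::real_vector set \<Rightarrow> ('v \<Rightarrow> real) \<Rightarrow> bool" where
  "linear_on W f \<longleftrightarrow>
     (\<forall>u\<in>W. \<forall>v\<in>W. f (u + v) = f u + f v) \<and> (\<forall>c. \<forall>u\<in>W. f (c *\<^sub>R u) = c * f u)"

lemma support_functional_on_iff:
  "support_functional_on Z x f \<longleftrightarrow>
     linear_on Z f \<and> (\<forall>u\<in>Z. \<bar>f u\<bar> \<le> norm u) \<and> f x = norm x"
  unfolding support_functional_on_def linear_on_def by blast

lemma linear_on_minus:
  assumes "subspace W" "linear_on W f" "u \<in> W"
  shows "f (- u) = - f u"
  using assms unfolding linear_on_def by (metis scaleR_minus1_left mult_minus1)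

lemma linear_on_diff:
  assumes "subspace W" "linear_on W f" "u \<in> W" "v \<in> W"
  shows "f (u - v) = f u - f v"
  using assms linear_on_minus[OF assms(1,2,4)] subspace_neg[OF assms(1,4)]
  unfolding linear_on_def by (metis diff_conv_add_uminus)

lemma linear_on_abs_le_norm:
  assumes "subspace W" "linear_on W f" "\<forall>w\<in>W. f w \<le> norm w" "u \<in> W"
  shows "\<bar>f u\<bar> \<le> norm u"
  using assms linear_on_minus[OF assms(1,2,4)] subspace_neg[OF assms(1,4)]
  by (metis abs_le_iff norm_minus_cancel minus_le_iff)

lemma span_insert_subspace:
  assumes "subspace W"
  shows "u \<in> span (insert z W) \<longleftrightarrow> (\<exists>w\<in>W. \<exists>t. u = w + t *\<^sub>R z)"
proof -
  have "span W = W" using assms by simp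
  then show ?thesis
    unfolding span_breakdown_eq by (metis add_diff_cancel diff_add_cancel)
qed

text \<open>Scaling the coefficient of z to \<open>\<pm>1\<close> reduces this to the two hypotheses on c.\<close>
lemma dominated_extension_bound:
  assumes W: "subspace W" and f: "linear_on W f" "\<forall>w\<in>W. f w \<le> norm w" and w: "w \<in> W"
    and c_le: "\<forall>w\<in>W. f w + c \<le> norm (w + z)" and c_ge: "\<forall>w\<in>W. f w - c \<le> norm (w - z)"
  shows "f w + t * c \<le> norm (w + t *\<^sub>R z)"
proof -
  have f_scale: "f (a *\<^sub>R w) = a * f w" for a using f(1) w unfolding linear_on_def by blast
  show ?thesis
  proof (cases t "0::real" rule: linorder_cases)
    case less
    have "f ((1 / - t) *\<^sub>R w) - c \<le> norm ((1 / - t) *\<^sub>R w - z)"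
      using c_ge subspace_scale[OF W w] by blast
    then have "(- t) * (f ((1 / - t) *\<^sub>R w) - c) \<le> (- t) * norm ((1 / - t) *\<^sub>R w - z)"
      using less by (intro mult_left_mono) auto
    moreover have "(- t) * f ((1 / - t) *\<^sub>R w) = f w" by (subst f_scale) (use less in simp)
    moreover have "w + t *\<^sub>R z = (- t) *\<^sub>R ((1 / - t) *\<^sub>R w - z)"
      using less by (simp add: algebra_simps)
    ultimately show ?thesis
      using less by (simp only: norm_scaleR abs_of_pos neg_0_less_iff_less) (simp add: algebra_simps)
  next
    case equal
    then show ?thesis using f(2) w by simp
  next
    case greater
    have "f ((1 / t) *\<^sub>R w) + c \<le> norm ((1 / t) *\<^sub>R w + z)"
      using c_le subspace_scale[OF W w] by blast
    then have "t * (f ((1 / t) *\<^sub>R w) + c) \<le> t * norm ((1 / t) *\<^sub>R w + z)"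
      using greater by (intro mult_left_mono) auto
    moreover have "t * f ((1 / t) *\<^sub>R w) = f w" by (subst f_scale) (use greater in simp)
    moreover have "w + t *\<^sub>R z = t *\<^sub>R ((1 / t) *\<^sub>R w + z)"
      using greater by (simp add: algebra_simps)
    ultimately show ?thesis
      using greater by (simp only: norm_scaleR abs_of_pos) (simp add: algebra_simps)
  qed
qed

lemma dominated_extension_step:
  assumes W: "subspace W" and f: "linear_on W f" "\<forall>w\<in>W. f w \<le> norm w" and z: "z \<notin> W"
    and c_le: "\<forall>w\<in>W. f w + c \<le> norm (w + z)" and c_ge: "\<forall>w\<in>W. f w - c \<le> norm (w - z)"
  shows "\<exists>G. linear_on (span (insert z W)) G \<and> (\<forall>u\<in>span (insert z W). G u \<le> norm u)
           \<and> (\<forall>w\<in>W. G w = f w) \<and> G z = c"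
proof -
  have unique: "w1 = w2 \<and> t1 = t2"
    if "w1 \<in> W" "w2 \<in> W" "w1 + t1 *\<^sub>R z = w2 + t2 *\<^sub>R z" for w1 w2 t1 t2
  proof (rule ccontr)
    assume "\<not> ?thesis"
    then have "t1 \<noteq> t2" using that(3) by auto
    moreover have "(t1 - t2) *\<^sub>R z = w2 - w1" using that(3) by (simp add: algebra_simps)
    ultimately have "z = (1 / (t1 - t2)) *\<^sub>R (w2 - w1)" by (metis scaleR_one divide_self_if
        scaleR_scaleR right_minus_eq times_divide_eq_left mult_1)
    then show False using z W that(1,2) by (metis subspace_diff subspace_scale)
  qed
  define G where "G u = (THE a. \<exists>w\<in>W. \<exists>t. u = w + t *\<^sub>R z \<and> a = f w + t * c)" for u
  have G: "G (w + t *\<^sub>R z) = f w + t * c" if "w \<in> W" for w t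
    unfolding G_def by (rule the_equality) (use that unique in blast)+
  have f_add: "f (u + v) = f u + f v" and f_scale: "f (a *\<^sub>R u) = a * f u"
    if "u \<in> W" "v \<in> W" for u v a
    using f(1) that unfolding linear_on_def by blast+
  have f0: "f 0 = 0" using f_scale[of 0 0 0] subspace_0[OF W] by simp
  have "linear_on (span (insert z W)) G"
    unfolding linear_on_def
  proof (intro conjI ballI allI)
    fix u v assume "u \<in> span (insert z W)" "v \<in> span (insert z W)"
    then obtain w1 t1 w2 t2 where w: "w1 \<in> W" "w2 \<in> W" and "u = w1 + t1 *\<^sub>R z" "v = w2 + t2 *\<^sub>R z"
      by (auto simp: span_insert_subspace[OF W])
    then have "u + v = (w1 + w2) + (t1 + t2) *\<^sub>R z" "G u + G v = f w1 + f w2 + (t1 + t2) * c"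
      using G by (simp_all add: algebra_simps)
    then show "G (u + v) = G u + G v"
      using G[OF subspace_add[OF W w]] f_add[OF w] by simp
  next
    fix a u assume "u \<in> span (insert z W)"
    then obtain w t where w: "w \<in> W" and "u = w + t *\<^sub>R z"
      by (auto simp: span_insert_subspace[OF W])
    then have "a *\<^sub>R u = a *\<^sub>R w + (a * t) *\<^sub>R z" "a * G u = a * f w + (a * t) * c"
      using G by (simp_all add: algebra_simps)
    then show "G (a *\<^sub>R u) = a * G u"
      using G[OF subspace_scale[OF W w]] f_scale[OF w w] by simp
  qed
  moreover have "\<forall>u\<in>span (insert z W). G u \<le> norm u"
    using dominated_extension_bound[OF W f _ c_le c_ge] G by (auto simp: span_insert_subspace[OF W])
  moreover have "\<forall>w\<in>W. G w = f w" using G[of _ 0] by simp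
  moreover have "G z = c" using G[OF subspace_0[OF W], of 1] f0 by simp
  ultimately show ?thesis by blast
qed

text \<open>The bounds are compatible since \<open>f w + f w' = f (w + w') \<le> norm (w - z) + norm (w' + z)\<close>,
  so a supremum separates them.\<close>
lemma dominated_extension_constant:
  assumes W: "subspace W" and f: "linear_on W f" "\<forall>w\<in>W. f w \<le> norm w"
  shows "\<exists>c. (\<forall>w\<in>W. f w + c \<le> norm (w + z)) \<and> (\<forall>w\<in>W. f w - c \<le> norm (w - z))"
proof -
  have compatible: "f w - norm (w - z) \<le> norm (w' + z) - f w'" if "w \<in> W" "w' \<in> W" for w w'
  proof -
    have "f w + f w' = f (w + w')" using f(1) that unfolding linear_on_def by metis
    also have "\<dots> \<le> norm ((w - z) + (w' + z))" using f(2) that subspace_add[OF W] by simp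
    also have "\<dots> \<le> norm (w - z) + norm (w' + z)" by (rule norm_triangle_ineq)
    finally show ?thesis by simp
  qed
  define c where "c = (SUP w\<in>W. f w - norm (w - z))"
  have bdd: "bdd_above ((\<lambda>w. f w - norm (w - z)) ` W)"
    by (rule bdd_aboveI2[where M="norm (0 + z) - f 0"]) (use compatible subspace_0[OF W] in blast)
  have "f w - c \<le> norm (w - z)" if "w \<in> W" for w
    using cSUP_upper[OF that bdd] unfolding c_def by simp
  moreover have "f w + c \<le> norm (w + z)" if "w \<in> W" for w
    using cSUP_least[of W, OF _ compatible[OF _ that]] subspace_0[OF W] unfolding c_def by force
  ultimately show ?thesis by blast
qed

definition graph_on :: "'v set \<Rightarrow> ('v \<Rightarrow> real) \<Rightarrow> ('v \<times> real) set" where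
  "graph_on D g = (\<lambda>x. (x, g x)) ` D"

lemma mem_graph_on_iff [simp]: "p \<in> graph_on D g \<longleftrightarrow> fst p \<in> D \<and> snd p = g (fst p)"
  unfolding graph_on_def by (cases p) auto

lemma graph_on_subset_iff: "graph_on D g \<subseteq> graph_on D' g' \<longleftrightarrow> D \<subseteq> D' \<and> (\<forall>x\<in>D. g x = g' x)"
  by (auto simp: subset_iff)

lemma domain_graph_on [simp]: "fst ` graph_on D g = D"
  unfolding graph_on_def by (simp add: image_image)

lemma chain_graph_on_Union:
  assumes C: "C \<in> chains {graph_on D g | D g. Q D g}"
  obtains g where "\<Union>C = graph_on (fst ` \<Union>C) g"
    and "\<And>x y. x \<in> fst ` \<Union>C \<Longrightarrow> y \<in> fst ` \<Union>C \<Longrightarrow>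
           \<exists>D' g'. Q D' g' \<and> graph_on D' g' \<in> C \<and> x \<in> D' \<and> y \<in> D' \<and> (\<forall>v\<in>D'. g v = g' v)"
proof -
  have member: "\<exists>D g. H = graph_on D g \<and> Q D g" if "H \<in> C" for H
    using C that unfolding chains_def by blast
  have functional: "a = b" if xab: "(x, a) \<in> \<Union>C" "(x, b) \<in> \<Union>C" for x a b
  proof -
    obtain H1 H2 where H: "H1 \<in> C" "H2 \<in> C" "(x, a) \<in> H1" "(x, b) \<in> H2" using xab by blast
    obtain D1 g1 D2 g2 where "H1 = graph_on D1 g1" "H2 = graph_on D2 g2"
      using member H(1,2) by blast
    moreover have "H1 \<subseteq> H2 \<or> H2 \<subseteq> H1" using C H(1,2) unfolding chains_def chain_subset_def by blast
    ultimately show ?thesis using H(3,4) by (auto simp: graph_on_subset_iff)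
  qed
  define g where "g x = (SOME a. (x, a) \<in> \<Union>C)" for x
  have g: "g x = a" if "(x, a) \<in> \<Union>C" for x a
    unfolding g_def by (rule some_equality) (use that functional in blast)+
  have "\<Union>C = graph_on (fst ` \<Union>C) g"
  proof (intro set_eqI iffI)
    fix p assume "p \<in> \<Union>C"
    then show "p \<in> graph_on (fst ` \<Union>C) g" using g[of "fst p" "snd p"] by simp
  next
    fix p assume "p \<in> graph_on (fst ` \<Union>C) g"
    then have "fst p \<in> fst ` \<Union>C" "snd p = g (fst p)" by simp_all
    moreover obtain q where "q \<in> \<Union>C" "fst q = fst p" using calculation(1) by force
    ultimately show "p \<in> \<Union>C" using g[of "fst q" "snd q"] by (metis prod.collapse)
  qed
  moreover have "\<exists>D' g'. Q D' g' \<and> graph_on D' g' \<in> C \<and> x \<in> D' \<and> y \<in> D' \<and> (\<forall>v\<in>D'. g v = g' v)"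
    if xy: "x \<in> fst ` \<Union>C" "y \<in> fst ` \<Union>C" for x y
  proof -
    obtain H1 H2 where H: "H1 \<in> C" "H2 \<in> C" "x \<in> fst ` H1" "y \<in> fst ` H2" using xy by blast
    then have "H1 \<subseteq> H2 \<or> H2 \<subseteq> H1" using C unfolding chains_def chain_subset_def by blast
    then obtain H where "H \<in> C" "x \<in> fst ` H" "y \<in> fst ` H" using H by blast
    moreover obtain D' g' where "H = graph_on D' g'" "Q D' g'" using member[OF \<open>H \<in> C\<close>] by blast
    moreover have "g v = g' v" if "v \<in> D'" for v
    proof (rule g)
      show "(v, g' v) \<in> \<Union>C" using \<open>H \<in> C\<close> \<open>H = graph_on D' g'\<close> that by auto
    qed
    ultimately show ?thesis by auto
  qed
  ultimately show ?thesis by (rule that)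
qed

definition dominated_extension ::
    "'v::real_normed_vector set \<Rightarrow> 'v set \<Rightarrow> ('v \<Rightarrow> real) \<Rightarrow> 'v set \<Rightarrow> ('v \<Rightarrow> real) \<Rightarrow> bool" where
  "dominated_extension Z W f D g \<longleftrightarrow> subspace D \<and> W \<subseteq> D \<and> D \<subseteq> Z \<and> linear_on D g \<and>
     (\<forall>u\<in>D. g u \<le> norm u) \<and> (\<forall>w\<in>W. g w = f w)"

lemma directed_Union_subspace_linear_on:
  assumes "0 \<in> D"
    and common: "\<And>x y. x \<in> D \<Longrightarrow> y \<in> D \<Longrightarrow> \<exists>D' g'. subspace D' \<and> D' \<subseteq> D \<and> linear_on D' g' \<and>
      (\<forall>v\<in>D'. g v = g' v) \<and> x \<in> D' \<and> y \<in> D'"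
  shows "subspace D" "linear_on D g"
proof -
  show "subspace D"
  proof (rule subspaceI)
    fix u v assume "u \<in> D" "v \<in> D"
    then obtain D' g' where "subspace D'" "D' \<subseteq> D" "u \<in> D'" "v \<in> D'" using common by blast
    then show "u + v \<in> D" using subspace_add by blast
  next
    fix a u assume "u \<in> D"
    then obtain D' g' where "subspace D'" "D' \<subseteq> D" "u \<in> D'" using common by blast
    then show "a *\<^sub>R u \<in> D" using subspace_scale by blast
  qed (rule assms(1))
  show "linear_on D g"
    unfolding linear_on_def
  proof (intro conjI ballI allI)
    fix u v assume "u \<in> D" "v \<in> D"
    then obtain D' g' where D': "subspace D'" "linear_on D' g'" "u \<in> D'" "v \<in> D'"
      and eq: "\<forall>v\<in>D'. g v = g' v"
      using common by blast
    then have "u + v \<in> D'" "g' (u + v) = g' u + g' v"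
      using subspace_add unfolding linear_on_def by blast+
    then show "g (u + v) = g u + g v" using eq D'(3,4) by simp
  next
    fix a u assume "u \<in> D"
    then obtain D' g' where D': "subspace D'" "linear_on D' g'" "u \<in> D'"
      and eq: "\<forall>v\<in>D'. g v = g' v"
      using common by blast
    then have "a *\<^sub>R u \<in> D'" "g' (a *\<^sub>R u) = a * g' u"
      using subspace_scale unfolding linear_on_def by blast+
    then show "g (a *\<^sub>R u) = a * g u" using eq D'(3) by simp
  qed
qed

lemma dominated_extension_Union_chain:
  assumes C: "C \<in> chains {graph_on D g | D g. dominated_extension Z W f D g}" and "C \<noteq> {}"
  shows "\<Union>C \<in> {graph_on D g | D g. dominated_extension Z W f D g}"
proof -
  obtain g where g: "\<Union>C = graph_on (fst ` \<Union>C) g"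
    and common: "\<And>x y. x \<in> fst ` \<Union>C \<Longrightarrow> y \<in> fst ` \<Union>C \<Longrightarrow> \<exists>D' g'. dominated_extension Z W f D' g' \<and>
         graph_on D' g' \<in> C \<and> x \<in> D' \<and> y \<in> D' \<and> (\<forall>v\<in>D'. g v = g' v)"
    using chain_graph_on_Union[OF C] by blast
  let ?D = "fst ` \<Union>C"
  have sub: "D' \<subseteq> ?D" if "graph_on D' g' \<in> C" for D' g'
  proof -
    have "fst ` graph_on D' g' \<subseteq> ?D" using that by blast
    then show ?thesis by simp
  qed
  obtain H where "H \<in> C" using \<open>C \<noteq> {}\<close> by blast
  then obtain D0 g0 where D0: "graph_on D0 g0 \<in> C" "dominated_extension Z W f D0 g0"
    using C chainsD2 by blast
  then have WD: "W \<subseteq> ?D" using sub unfolding dominated_extension_def by blast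
  have zero: "0 \<in> ?D" using sub[OF D0(1)] D0(2) subspace_0 unfolding dominated_extension_def by blast
  have directed: "\<exists>D' g'. subspace D' \<and> D' \<subseteq> ?D \<and> linear_on D' g' \<and> (\<forall>v\<in>D'. g v = g' v) \<and>
      x \<in> D' \<and> y \<in> D'" if xy: "x \<in> ?D" "y \<in> ?D" for x y
  proof -
    obtain D' g' where "dominated_extension Z W f D' g'" "graph_on D' g' \<in> C" "x \<in> D'" "y \<in> D'"
      "\<forall>v\<in>D'. g v = g' v"
      using common[OF xy] by blast
    then show ?thesis using sub unfolding dominated_extension_def by blast
  qed
  have "subspace ?D" "linear_on ?D g" using directed_Union_subspace_linear_on[OF zero directed] by blast+
  moreover have "?D \<subseteq> Z" "\<forall>u\<in>?D. g u \<le> norm u"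
    using common unfolding dominated_extension_def by (metis subsetD subsetI)+
  moreover have "\<forall>w\<in>W. g w = f w"
    using common WD unfolding dominated_extension_def by (metis subsetD)
  ultimately have "dominated_extension Z W f ?D g" unfolding dominated_extension_def using WD by blast
  then show ?thesis using g by blast
qed

lemma dominated_extension_maximal_total:
  assumes Z: "subspace Z" and ext: "dominated_extension Z W f D g"
    and maximal: "\<And>D' g'. dominated_extension Z W f D' g' \<Longrightarrow> graph_on D g \<subseteq> graph_on D' g' \<Longrightarrow>
      graph_on D' g' = graph_on D g"
  shows "D = Z"
proof (rule ccontr)
  have D: "subspace D" "W \<subseteq> D" "D \<subseteq> Z" "linear_on D g" "\<forall>u\<in>D. g u \<le> norm u"
    "\<forall>w\<in>W. g w = f w"
    using ext unfolding dominated_extension_def by simp_all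
  assume "D \<noteq> Z"
  then obtain z where z: "z \<in> Z" "z \<notin> D" using D(3) by blast
  obtain c where "\<forall>w\<in>D. g w + c \<le> norm (w + z)" "\<forall>w\<in>D. g w - c \<le> norm (w - z)"
    using dominated_extension_constant[OF D(1,4,5)] by blast
  then obtain G where G: "linear_on (span (insert z D)) G" "\<forall>u\<in>span (insert z D). G u \<le> norm u"
      "\<forall>w\<in>D. G w = g w"
    using dominated_extension_step[OF D(1,4,5) z(2)] by blast
  have D_sub: "D \<subseteq> span (insert z D)" by (rule subset_trans[OF subset_insertI span_superset])
  have "span (insert z D) \<subseteq> Z" using z(1) D(3) Z by (simp add: span_minimal)
  then have "dominated_extension Z W f (span (insert z D)) G"
    unfolding dominated_extension_def using subspace_span D(2,6) D_sub G by auto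
  moreover have "graph_on D g \<subseteq> graph_on (span (insert z D)) G"
    using G(3) D_sub unfolding graph_on_subset_iff by simp
  ultimately have "graph_on (span (insert z D)) G = graph_on D g" by (rule maximal)
  then have "span (insert z D) = D" by (metis domain_graph_on)
  then show False using z(2) span_base[of z "insert z D"] by simp
qed

theorem hahn_banach_norm:
  fixes Z :: "'v::real_normed_vector set"
  assumes Z: "subspace Z" and W: "subspace W" "W \<subseteq> Z"
    and f: "linear_on W f" "\<forall>w\<in>W. f w \<le> norm w"
  shows "\<exists>F. linear_on Z F \<and> (\<forall>u\<in>Z. F u \<le> norm u) \<and> (\<forall>w\<in>W. F w = f w)"
proof -
  define A where "A = {graph_on D g | D g. dominated_extension Z W f D g}"
  have "graph_on W f \<in> A" unfolding A_def dominated_extension_def using W f by blast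
  have "\<exists>U\<in>A. \<forall>H\<in>C. H \<subseteq> U" if C: "C \<in> chains A" for C
  proof (cases "C = {}")
    case True
    then show ?thesis using \<open>graph_on W f \<in> A\<close> by blast
  next
    case False
    then have "\<Union>C \<in> A" using dominated_extension_Union_chain C unfolding A_def by blast
    then show ?thesis by blast
  qed
  then obtain M where "M \<in> A" and maximal: "\<forall>H\<in>A. M \<subseteq> H \<longrightarrow> H = M"
    using Zorn_Lemma2[of A] by blast
  then obtain D g where M: "M = graph_on D g" and ext: "dominated_extension Z W f D g"
    unfolding A_def by blast
  have "D = Z" using dominated_extension_maximal_total[OF Z ext] maximal unfolding A_def M by blast
  then show ?thesis using ext unfolding dominated_extension_def by blast
qed

section \<open>Support functionals and smooth points\<close>

lemma support_functional_with_value: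
  fixes Z :: "'v::real_normed_vector set"
  assumes Z: "subspace Z" and y: "y \<in> Z" "y \<noteq> 0" and z: "z \<in> Z"
    and c: "\<forall>a t. a * norm y + t * c \<le> norm (a *\<^sub>R y + t *\<^sub>R z)"
  shows "\<exists>G. support_functional_on Z y G \<and> G z = c"
proof -
  have "linear_on {0} (\<lambda>_. 0)" by (simp add: linear_on_def)
  moreover have "span (insert y {0}) = span {y}" by (metis insert_commute span_insert_0)
  ultimately obtain G1 where G1: "linear_on (span {y}) G1" "\<forall>u\<in>span {y}. G1 u \<le> norm u" "G1 y = norm y"
    using dominated_extension_step[OF subspace_single_0, of "\<lambda>_. 0" y "norm y"] y(2) by auto
  have G1_scale: "G1 (a *\<^sub>R y) = a * norm y" for a
    using G1(1,3) span_base[of y "{y}"] unfolding linear_on_def by simp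
  have span_y: "span {y} \<subseteq> Z" using Z y(1) by (simp add: span_minimal)
  have extend: "\<exists>G. support_functional_on Z y G \<and> G z = c"
    if V: "subspace V" "V \<subseteq> Z" "span {y} \<subseteq> V" "linear_on V G" "\<forall>u\<in>V. G u \<le> norm u"
      "\<forall>u\<in>span {y}. G u = G1 u" "G z = c" "z \<in> V" for V G
  proof -
    obtain F where F: "linear_on Z F" "\<forall>u\<in>Z. F u \<le> norm u" "\<forall>w\<in>V. F w = G w"
      using hahn_banach_norm[OF Z V(1,2,4,5)] by blast
    then have "support_functional_on Z y F"
      using V(3,6) G1(3) span_base[of y "{y}"] linear_on_abs_le_norm[OF Z F(1,2)]
      unfolding support_functional_on_iff by auto
    then show ?thesis using F(3) V(7,8) by blast
  qed
  show ?thesis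
  proof (cases "z \<in> span {y}")
    case True
    then obtain t0 where t0: "z = t0 *\<^sub>R y" by (auto simp: span_singleton)
    have "- t0 * norm y + c \<le> norm ((- t0) *\<^sub>R y + z)" "t0 * norm y - c \<le> norm (t0 *\<^sub>R y - z)"
      using c[rule_format, of "- t0" 1] c[rule_format, of t0 "- 1"] by simp_all
    then have "c = t0 * norm y" using t0 by simp
    then show ?thesis
      using extend[of "span {y}" G1] G1 G1_scale t0 True span_y by simp
  next
    case False
    have "\<forall>w\<in>span {y}. G1 w + c \<le> norm (w + z)" "\<forall>w\<in>span {y}. G1 w - c \<le> norm (w - z)"
      using c[rule_format, of _ 1] c[rule_format, of _ "- 1"] G1_scale by (auto simp: span_singleton)
    then obtain G2 where G2: "linear_on (span (insert z (span {y}))) G2"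
        "\<forall>u\<in>span (insert z (span {y})). G2 u \<le> norm u" "\<forall>w\<in>span {y}. G2 w = G1 w" "G2 z = c"
      using dominated_extension_step[OF subspace_span G1(1,2) False] by blast
    have "span (insert z (span {y})) \<subseteq> Z"
      using Z z span_y by (simp add: span_minimal)
    then show ?thesis
      using extend[OF subspace_span _ _ G2(1,2,3,4)] span_superset[of "insert z (span {y})"] by blast
  qed
qed

lemma support_functional_exists:
  fixes Z :: "'v::real_normed_vector set"
  assumes "subspace Z" "y \<in> Z"
  shows "\<exists>G. support_functional_on Z y G"
proof (cases "y = 0")
  case True
  then show ?thesis by (auto simp: support_functional_on_def intro: exI[of _ "\<lambda>_. 0"])
next
  case False
  have "\<forall>a t. a * norm y + t * norm y \<le> norm (a *\<^sub>R y + t *\<^sub>R y)"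
    by (simp add: mult_right_mono flip: scaleR_add_left distrib_right)
  then show ?thesis using support_functional_with_value[OF assms False assms(2)] by blast
qed

lemma support_functional_on_UNIV_diff:
  "support_functional_on UNIV y h \<Longrightarrow> h (a - b) = h a - h b"
  using linear_on_diff[OF subspace_UNIV] unfolding support_functional_on_iff by blast

lemma support_functional_sequence:
  obtains h where "\<And>n. support_functional_on UNIV (y n) (h n)"
proof -
  have "\<forall>n. \<exists>h. support_functional_on UNIV (y n) h"
    using support_functional_exists[OF subspace_UNIV] by blast
  then show thesis using that by metis
qed

lemma support_functionals_diff_tendsto_zero:
  assumes h: "\<And>n. support_functional_on UNIV (y n) (h n)" and u: "u \<longlonglongrightarrow> v"
  shows "(\<lambda>n. h n (u n) - h n v) \<longlonglongrightarrow> 0"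
proof (rule Lim_null_comparison)
  have "norm (h n (u n) - h n v) \<le> norm (u n - v)" for n
  proof -
    have "h n (u n) - h n v = h n (u n - v)" by (simp add: support_functional_on_UNIV_diff[OF h])
    moreover have "\<bar>h n (u n - v)\<bar> \<le> norm (u n - v)" using h[of n] unfolding support_functional_on_def by blast
    ultimately show ?thesis by simp
  qed
  then show "\<forall>\<^sub>F n in sequentially. norm (h n (u n) - h n v) \<le> norm (u n - v)" by simp
  show "(\<lambda>n. norm (u n - v)) \<longlonglongrightarrow> 0" using tendsto_norm_zero[OF LIM_zero[OF u]] .
qed

lemma norming_functional:
  fixes x :: "'v::real_normed_vector"
  obtains h :: "'v \<Rightarrow>\<^sub>L real" where "h x = norm x" "\<And>u. \<bar>h u\<bar> \<le> norm u"
proof -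
  obtain s where s: "support_functional_on UNIV x s"
    using support_functional_exists[OF subspace_UNIV] by blast
  then have "bounded_linear s"
    unfolding support_functional_on_def by (intro bounded_linear_intro[where K=1]) auto
  then show ?thesis
    using s that[of "Blinfun s"] by (simp add: bounded_linear_Blinfun_apply support_functional_on_def)
qed

lemma blinfun_functionals_separate:
  fixes u v :: "'v::real_normed_vector"
  assumes "\<And>h :: 'v \<Rightarrow>\<^sub>L real. h u = h v"
  shows "u = v"
proof -
  obtain h :: "'v \<Rightarrow>\<^sub>L real" where "h (u - v) = norm (u - v)" using norming_functional by blast
  then show ?thesis using assms[of h] by (simp add: blinfun.diff_right)
qed

lemma LIMSEQ_if_subseq_limits_eq:
  fixes X :: "nat \<Rightarrow> 'a::heine_borel"
  assumes bounded: "bounded (range X)"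
    and limits: "\<And>r l. strict_mono r \<Longrightarrow> (X \<circ> r) \<longlonglongrightarrow> l \<Longrightarrow> l = L"
  shows "X \<longlonglongrightarrow> L"
proof (rule ccontr)
  assume "\<not> X \<longlonglongrightarrow> L"
  then obtain e where e: "e > 0" "\<forall>N. \<exists>n\<ge>N. e \<le> dist (X n) L"
    unfolding LIMSEQ_def by (auto simp: not_less)
  define S where "S = {n. e \<le> dist (X n) L}"
  have "infinite S" unfolding infinite_nat_iff_unbounded_le S_def using e(2) by blast
  then have q: "strict_mono (enumerate S)" "\<And>n. e \<le> dist (X (enumerate S n)) L"
    using strict_mono_enumerate enumerate_in_set unfolding S_def by blast+
  have "bounded (range (X \<circ> enumerate S))" using bounded by (rule bounded_subset) auto
  then obtain l r where r: "strict_mono r" "(X \<circ> enumerate S \<circ> r) \<longlonglongrightarrow> l"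
    using bounded_imp_convergent_subsequence by blast
  then have "l = L" using limits[of "enumerate S \<circ> r"] q(1) by (simp add: strict_mono_o o_assoc)
  moreover have "e \<le> dist l L"
    using r(2) q(2) by (intro LIMSEQ_le_const[OF tendsto_dist[OF r(2) tendsto_const]]) auto
  ultimately show False using e(1) by simp
qed

text \<open>Every cluster value c of \<open>h n z\<close> satisfies the inequality that, by
  \<open>support_functional_with_value\<close>, makes it the value at z of some support functional at \<open>y0\<close>;
  smoothness of \<open>y0\<close> forces \<open>c = g z\<close>.\<close>
lemma smooth_point_supports_converge:
  fixes Z :: "'v::real_normed_vector set"
  assumes Z: "subspace Z" and smooth: "smooth_point_in Z y0"
    and y: "\<forall>n. y n \<in> Z" "y \<longlonglongrightarrow> y0"
    and h: "\<forall>n. linear_on Z (h n)" "\<forall>n. \<forall>u\<in>Z. \<bar>h n u\<bar> \<le> norm u"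
    and h_y: "(\<lambda>n. h n (y n)) \<longlonglongrightarrow> norm y0"
    and g: "support_functional_on Z y0 g" and z: "z \<in> Z"
  shows "(\<lambda>n. h n z) \<longlonglongrightarrow> g z"
proof (rule LIMSEQ_if_subseq_limits_eq)
  show "bounded (range (\<lambda>n. h n z))"
    using h(2) z by (intro boundedI[where B="norm z"]) auto
next
  fix s c assume s: "strict_mono s" and c: "((\<lambda>n. h n z) \<circ> s) \<longlonglongrightarrow> c"
  have "a * norm y0 + t * c \<le> norm (a *\<^sub>R y0 + t *\<^sub>R z)" for a t
  proof (rule LIMSEQ_le)
    show "(\<lambda>n. a * h (s n) (y (s n)) + t * h (s n) z) \<longlonglongrightarrow> a * norm y0 + t * c"
      using LIMSEQ_subseq_LIMSEQ[OF h_y s] c by (intro tendsto_intros) (simp_all add: o_def)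
    show "(\<lambda>n. norm (a *\<^sub>R y (s n) + t *\<^sub>R z)) \<longlonglongrightarrow> norm (a *\<^sub>R y0 + t *\<^sub>R z)"
      using LIMSEQ_subseq_LIMSEQ[OF y(2) s] by (intro tendsto_intros) (simp add: o_def)
    have "a * h (s n) (y (s n)) + t * h (s n) z = h (s n) (a *\<^sub>R y (s n) + t *\<^sub>R z)" for n
      using h(1) y(1) z subspace_scale[OF Z] unfolding linear_on_def by metis
    moreover have "a *\<^sub>R y (s n) + t *\<^sub>R z \<in> Z" for n
      using y(1) z by (simp add: Z subspace_add subspace_scale)
    ultimately show "\<exists>N. \<forall>n\<ge>N. a * h (s n) (y (s n)) + t * h (s n) z \<le> norm (a *\<^sub>R y (s n) + t *\<^sub>R z)"
      using h(2) by (metis abs_le_D1)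
  qed
  then obtain G where "support_functional_on Z y0 G" "G z = c"
    using smooth support_functional_with_value[OF Z _ _ z] unfolding smooth_point_in_def by blast
  then show "c = g z" using smooth g z unfolding smooth_point_in_def by metis
qed

section \<open>Compact operators and the sets \<open>M_set\<close>\<close>

lemma compact_closure_of_subset:
  fixes A :: "'v::metric_space set"
  assumes "compact C" "A \<subseteq> C"
  shows "compact (closure A)"
proof -
  have "closure A \<subseteq> C" using assms by (simp add: closure_minimal compact_imp_closed)
  then show ?thesis using compact_Int_closed[OF assms(1), of "closure A"] by (simp add: Int_absorb1)
qed

lemma subspace_compact_ops: "subspace compact_ops"
proof (rule subspaceI)
  show "0 \<in> compact_ops"
    unfolding compact_ops_def by (simp add: image_constant[of 0])
next
  fix S T :: "'a::real_normed_vector \<Rightarrow>\<^sub>L 'b::real_normed_vector"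
  assume "S \<in> compact_ops" "T \<in> compact_ops"
  then have "compact {u + v | u v. u \<in> closure (S ` cball 0 1) \<and> v \<in> closure (T ` cball 0 1)}"
    unfolding compact_ops_def mem_Collect_eq by (rule compact_sums)
  moreover have "(S + T) ` cball 0 1 \<subseteq> {u + v | u v. u \<in> closure (S ` cball 0 1) \<and> v \<in> closure (T ` cball 0 1)}"
    by (auto simp: plus_blinfun.rep_eq intro: closure_subset[THEN subsetD])
  ultimately show "S + T \<in> compact_ops" unfolding compact_ops_def mem_Collect_eq by (rule compact_closure_of_subset)
next
  fix c :: real and S :: "'a \<Rightarrow>\<^sub>L 'b" assume "S \<in> compact_ops"
  then have "compact (scaleR c ` closure (S ` cball 0 1))"
    unfolding compact_ops_def mem_Collect_eq by (rule compact_scaling)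
  moreover have "(c *\<^sub>R S) ` cball 0 1 \<subseteq> scaleR c ` closure (S ` cball 0 1)"
    by (auto simp: scaleR_blinfun.rep_eq intro: closure_subset[THEN subsetD])
  ultimately show "c *\<^sub>R S \<in> compact_ops" unfolding compact_ops_def mem_Collect_eq by (rule compact_closure_of_subset)
qed

definition rank_one :: "('a::real_normed_vector \<Rightarrow>\<^sub>L real) \<Rightarrow> 'b::real_normed_vector \<Rightarrow> ('a \<Rightarrow>\<^sub>L 'b)" where
  "rank_one \<phi> w = blinfun_scaleR_left w o\<^sub>L \<phi>"

lemma rank_one_apply [simp]: "rank_one \<phi> w x = \<phi> x *\<^sub>R w"
  unfolding rank_one_def by (simp add: blinfun_compose.rep_eq)

lemma rank_one_compact: "rank_one \<phi> w \<in> compact_ops"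
proof -
  have "compact ((\<lambda>t. t *\<^sub>R w) ` cball 0 (norm \<phi>))"
    by (intro compact_continuous_image continuous_intros compact_cball)
  moreover have "rank_one \<phi> w ` cball 0 1 \<subseteq> (\<lambda>t. t *\<^sub>R w) ` cball 0 (norm \<phi>)"
  proof
    fix v assume "v \<in> rank_one \<phi> w ` cball 0 1"
    then obtain x where x: "norm x \<le> 1" "v = \<phi> x *\<^sub>R w" by auto
    have "norm (\<phi> x) \<le> norm \<phi> * norm x" by (rule norm_blinfun)
    also have "\<dots> \<le> norm \<phi>" using x(1) by (simp add: mult_left_le)
    finally show "v \<in> (\<lambda>t. t *\<^sub>R w) ` cball 0 (norm \<phi>)" using x(2) by auto
  qed
  ultimately show ?thesis unfolding compact_ops_def mem_Collect_eq by (rule compact_closure_of_subset)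
qed

lemma norm_blinfun_unit_le: "norm x = 1 \<Longrightarrow> norm (blinfun_apply A x) \<le> norm A"
  using norm_blinfun[of A x] by simp

lemma blinfun_almost_norming:
  fixes A :: "'a::real_normed_vector \<Rightarrow>\<^sub>L 'b::real_normed_vector"
  assumes "(v :: 'a) \<noteq> 0" and "\<delta> > 0"
  shows "\<exists>x. norm x = 1 \<and> norm A - \<delta> < norm (A x)"
proof (rule ccontr)
  assume "\<not> ?thesis"
  then have le: "norm (A x) \<le> norm A - \<delta>" if "norm x = 1" for x
    using that by (simp add: not_less)
  have "norm ((1 / norm v) *\<^sub>R v) = 1" using assms(1) by simp
  then have "0 \<le> norm A - \<delta>" using le norm_ge_zero order_trans by metis
  moreover have "norm (A x) \<le> (norm A - \<delta>) * norm x" for x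
  proof (cases "x = 0")
    case False
    then have "(1 / norm x) * norm (A x) \<le> norm A - \<delta>"
      using le[of "(1 / norm x) *\<^sub>R x"] by (simp add: blinfun.scaleR_right)
    then show ?thesis using False by (simp add: field_simps)
  qed simp
  ultimately have "norm A \<le> norm A - \<delta>" by (rule norm_blinfun_bound)
  then show False using assms(2) by simp
qed

lemma almost_norming_sequence:
  fixes A :: "nat \<Rightarrow> 'a::real_normed_vector \<Rightarrow>\<^sub>L 'b::real_normed_vector"
  assumes "(v :: 'a) \<noteq> 0" and "\<And>n. d n > 0"
  obtains x where "\<And>n. norm (x n) = 1" "\<And>n. norm (A n) - d n < norm (A n (x n))"
proof -
  have "\<forall>n. \<exists>x. norm x = 1 \<and> norm (A n) - d n < norm (A n x)"
    using blinfun_almost_norming[OF assms(1) assms(2)] by blast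
  then show thesis using that by metis
qed

lemma norm_tendsto_of_almost_norming:
  assumes x: "\<And>n. norm (x n) = 1" "\<And>n. norm T - d n < norm (blinfun_apply T (x n))"
    and d: "d \<longlonglongrightarrow> 0"
  shows "(\<lambda>n. norm (T (x n))) \<longlonglongrightarrow> norm T"
proof (rule tendsto_sandwich)
  show "\<forall>\<^sub>F n in sequentially. norm T - d n \<le> norm (T (x n))"
    using x(2) by (simp add: less_imp_le)
  show "\<forall>\<^sub>F n in sequentially. norm (T (x n)) \<le> norm T"
    using norm_blinfun_unit_le[OF x(1), of T] by simp
  show "(\<lambda>n. norm T - d n) \<longlonglongrightarrow> norm T" using tendsto_diff[OF tendsto_const d] by simp
qed simp

lemma support_functional_evaluation:
  fixes T :: "'a::real_normed_vector \<Rightarrow>\<^sub>L 'b::real_normed_vector"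
  assumes x: "norm x = 1" "norm (T x) = norm T" and g: "support_functional_on UNIV (T x) g"
  shows "support_functional_on Z T (\<lambda>S. g (S x))"
proof -
  have "\<bar>g (S x)\<bar> \<le> norm S" for S :: "'a \<Rightarrow>\<^sub>L 'b"
    using g norm_blinfun_unit_le[OF x(1), of S] unfolding support_functional_on_def
    by (meson UNIV_I order_trans)
  then show ?thesis
    using g x(2) unfolding support_functional_on_def
    by (simp add: plus_blinfun.rep_eq scaleR_blinfun.rep_eq)
qed

definition M_set_concentrates :: "('a::real_normed_vector \<Rightarrow>\<^sub>L 'b::real_normed_vector) \<Rightarrow> 'a \<Rightarrow> bool" where
  "M_set_concentrates T x0 \<longleftrightarrow> (\<forall>\<epsilon>>0. \<exists>d>0. \<forall>\<delta>. 0 < \<delta> \<and> \<delta> \<le> d \<and> \<delta> < norm T \<longrightarrow>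
     M_set T \<delta> \<subseteq> ball x0 \<epsilon> \<union> ball (- x0) \<epsilon>)"

lemma M_set_concentrates_sign_adjusted_LIMSEQ:
  fixes T :: "'a::real_normed_vector \<Rightarrow>\<^sub>L 'b::real_normed_vector"
  assumes conc: "M_set_concentrates T x0" and T0: "T \<noteq> 0"
    and x: "\<And>n. norm (x n) = 1" "\<And>n. norm T - d n < norm (T (x n))" and d: "d \<longlonglongrightarrow> 0"
  obtains x' where "\<And>n. x' n = x n \<or> x' n = - x n" "x' \<longlonglongrightarrow> x0"
proof
  define x' where "x' n = (if norm (x n - x0) \<le> norm (x n + x0) then x n else - x n)" for n
  show "x' n = x n \<or> x' n = - x n" for n unfolding x'_def by simp
  have "norm (- x n - x0) = norm (x n + x0)" for n
    by (metis minus_add_distrib norm_minus_cancel diff_conv_add_uminus)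
  then have dist_x': "dist (x' n) x0 = min (dist (x n) x0) (dist (x n) (- x0))" for n
    unfolding x'_def dist_norm by (simp add: min_def)
  show "x' \<longlonglongrightarrow> x0"
  proof (rule LIMSEQ_I)
    fix e :: real assume "e > 0"
    then obtain dd where dd: "dd > 0"
      "\<forall>\<delta>. 0 < \<delta> \<and> \<delta> \<le> dd \<and> \<delta> < norm T \<longrightarrow> M_set T \<delta> \<subseteq> ball x0 e \<union> ball (- x0) e"
      using conc unfolding M_set_concentrates_def by blast
    have "0 < min dd (norm T)" using dd(1) T0 by simp
    then obtain N where N: "\<And>n. n \<ge> N \<Longrightarrow> d n < min dd (norm T)"
      using order_tendstoD(2)[OF d] unfolding eventually_sequentially by blast
    have "dist (x' n) x0 < e" if "n \<ge> N" for n
    proof -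
      have "0 < d n" using x(2)[of n] norm_blinfun_unit_le[OF x(1), of T n] by simp
      moreover have "x n \<in> M_set T (d n)" unfolding M_set_def using x by simp
      ultimately have "x n \<in> ball x0 e \<union> ball (- x0) e"
        using dd(2) N[OF that] by force
      then show ?thesis unfolding dist_x' by (auto simp: dist_commute)
    qed
    then show "\<exists>N. \<forall>n\<ge>N. norm (x' n - x0) < e" unfolding dist_norm by blast
  qed
qed

lemma M_set_concentrates_norm_attained:
  fixes T :: "'a::real_normed_vector \<Rightarrow>\<^sub>L 'b::real_normed_vector"
  assumes conc: "M_set_concentrates T x0" and T0: "T \<noteq> 0"
  shows "norm x0 = 1" "norm (T x0) = norm T"
proof -
  obtain v where "T v \<noteq> 0" using T0 by (metis blinfun_eqI zero_blinfun.rep_eq)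
  then have "v \<noteq> 0" by auto
  then obtain x where x: "\<And>n. norm (x n) = 1" "\<And>n. norm T - inverse (real (Suc n)) < norm (T (x n))"
    using almost_norming_sequence[of v "\<lambda>n. inverse (real (Suc n))" "\<lambda>_. T"] by auto
  have d: "(\<lambda>n. inverse (real (Suc n))) \<longlonglongrightarrow> 0" by (rule LIMSEQ_inverse_real_of_nat)
  obtain x' where x': "\<And>n. x' n = x n \<or> x' n = - x n" "x' \<longlonglongrightarrow> x0"
    using M_set_concentrates_sign_adjusted_LIMSEQ[OF conc T0 x d] by blast
  have "norm (x' n) = 1" "norm (T (x' n)) = norm (T (x n))" for n
    using x'(1)[of n] x(1)[of n] by (auto simp: blinfun.minus_right)
  then have "(\<lambda>n. norm (x' n)) \<longlonglongrightarrow> 1" "(\<lambda>n. norm (T (x' n))) \<longlonglongrightarrow> norm T"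
    using norm_tendsto_of_almost_norming[OF x d] by simp_all
  moreover have "(\<lambda>n. norm (x' n)) \<longlonglongrightarrow> norm x0" "(\<lambda>n. norm (T (x' n))) \<longlonglongrightarrow> norm (T x0)"
    using x'(2) by (auto intro!: tendsto_intros bounded_linear.tendsto[OF blinfun.bounded_linear_right])
  ultimately show "norm x0 = 1" "norm (T x0) = norm T" using LIMSEQ_unique by metis+
qed

section \<open>Concentration of \<open>M_set\<close> implies smoothness\<close>

lemma perturbation_almost_norming:
  fixes T S :: "'a::real_normed_vector \<Rightarrow>\<^sub>L 'b::real_normed_vector"
  assumes x: "norm x = 1" and t: "0 < t" "t \<le> 1"
    and A: "norm (T + t *\<^sub>R S) - t\<^sup>2 < norm ((T + t *\<^sub>R S) x)"
  shows "norm T - t * (2 * norm S + 1) < norm (T x)"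
proof -
  have "norm T \<le> norm (T + t *\<^sub>R S) + norm (t *\<^sub>R S)"
    using norm_triangle_ineq4[of "T + t *\<^sub>R S" "t *\<^sub>R S"] by simp
  then have "norm T \<le> norm (T + t *\<^sub>R S) + t * norm S" using t(1) by simp
  moreover have "norm ((T + t *\<^sub>R S) x) \<le> norm (T x) + norm (t *\<^sub>R S x)"
    using norm_triangle_ineq[of "T x" "t *\<^sub>R S x"] by (simp add: plus_blinfun.rep_eq scaleR_blinfun.rep_eq)
  moreover have "norm (t *\<^sub>R S x) \<le> t * norm S"
    using t(1) norm_blinfun_unit_le[OF x, of S] by (simp add: mult_left_mono)
  moreover have "t\<^sup>2 \<le> t" using t by (simp add: power2_eq_square mult_left_le)
  ultimately show ?thesis using A by (simp add: algebra_simps)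
qed

lemma support_functional_perturbation_bound:
  fixes T S :: "'a::real_normed_vector \<Rightarrow>\<^sub>L 'b::real_normed_vector"
  assumes F: "support_functional_on compact_ops T F" and TK: "T \<in> compact_ops" and SK: "S \<in> compact_ops"
    and t: "0 < t" and x: "norm x = 1"
    and A: "norm (T + t *\<^sub>R S) - t\<^sup>2 < norm ((T + t *\<^sub>R S) x)"
    and h: "support_functional_on UNIV ((T + t *\<^sub>R S) x) h"
  shows "F S < h (S x) + t"
proof -
  have tSK: "t *\<^sub>R S \<in> compact_ops" using subspace_compact_ops SK by (rule subspace_scale)
  have F_parts: "linear_on compact_ops F" "\<forall>u\<in>compact_ops. \<bar>F u\<bar> \<le> norm u" "F T = norm T"
    using F unfolding support_functional_on_iff by simp_all
  then have "F (T + t *\<^sub>R S) = norm T + t * F S"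
    using TK SK tSK unfolding linear_on_def by simp
  moreover have "F (T + t *\<^sub>R S) \<le> norm (T + t *\<^sub>R S)"
    using F_parts(2) subspace_add[OF subspace_compact_ops TK tSK] by (meson abs_le_D1)
  moreover have "norm ((T + t *\<^sub>R S) x) = h (T x) + t * h (S x)"
    using h unfolding support_functional_on_def by (auto simp: plus_blinfun.rep_eq scaleR_blinfun.rep_eq)
  moreover have "h (T x) \<le> norm T"
    using h norm_blinfun_unit_le[OF x, of T] unfolding support_functional_on_def
    by (meson UNIV_I abs_le_D1 order_trans)
  ultimately have "t * F S < t * (h (S x) + t)"
    using A by (simp add: algebra_simps power2_eq_square)
  then show ?thesis using t by simp
qed

text \<open>Perturb T to \<open>T + t S\<close> and norm the perturbation almost at unit vectors \<open>x\<^sub>t\<close>;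
  these nearly norm T, hence tend to \<open>\<pm>x0\<close>, and smoothness of \<open>T x0\<close> makes the support
  functionals at \<open>(T + t S) x\<^sub>t\<close> converge to g at \<open>S x0\<close>.\<close>
lemma support_functional_le_evaluation:
  fixes T :: "'a::real_normed_vector \<Rightarrow>\<^sub>L 'b::real_normed_vector"
  assumes conc: "M_set_concentrates T x0" and T0: "T \<noteq> 0" and TK: "T \<in> compact_ops"
    and smooth: "smooth_point_in UNIV (T x0)" and g: "support_functional_on UNIV (T x0) g"
    and F: "support_functional_on compact_ops T F" and SK: "S \<in> compact_ops"
  shows "F S \<le> g (S x0)"
proof -
  have "norm x0 = 1" using M_set_concentrates_norm_attained[OF conc T0] by simp
  then have "x0 \<noteq> 0" by auto
  define t where "t n = inverse (real (Suc n))" for n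
  have t: "0 < t n" "t n \<le> 1" for n unfolding t_def by (simp_all add: field_simps)
  have t_0: "t \<longlonglongrightarrow> 0" unfolding t_def by (rule LIMSEQ_inverse_real_of_nat)
  have "(t n)\<^sup>2 > 0" for n using t(1)[of n] by simp
  then obtain x where x: "\<And>n. norm (x n) = 1"
    "\<And>n. norm (T + t n *\<^sub>R S) - (t n)\<^sup>2 < norm ((T + t n *\<^sub>R S) (x n))"
    using almost_norming_sequence[OF \<open>x0 \<noteq> 0\<close>, of "\<lambda>n. (t n)\<^sup>2" "\<lambda>n. T + t n *\<^sub>R S"]
    by blast
  define d where "d n = t n * (2 * norm S + 1)" for n
  have "norm T - d n < norm (T (x n))" for n
    unfolding d_def using perturbation_almost_norming[OF x(1) t x(2)] .
  moreover have "d \<longlonglongrightarrow> 0"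
    unfolding d_def using tendsto_mult_left_zero[OF t_0] .
  ultimately obtain x' where x': "\<And>n. x' n = x n \<or> x' n = - x n" "x' \<longlonglongrightarrow> x0"
    using M_set_concentrates_sign_adjusted_LIMSEQ[OF conc T0, where x=x and d=d] x(1) by blast
  have x'_unit: "norm (x' n) = 1"
    and x'_norming: "norm (T + t n *\<^sub>R S) - (t n)\<^sup>2 < norm ((T + t n *\<^sub>R S) (x' n))" for n
    using x(1)[of n] x(2)[of n] x'(1)[of n] by (auto simp: blinfun.minus_right)
  define y where "y n = (T + t n *\<^sub>R S) (x' n)" for n
  have Tx': "(\<lambda>n. T (x' n)) \<longlonglongrightarrow> T x0" and Sx': "(\<lambda>n. S (x' n)) \<longlonglongrightarrow> S x0"
    using x'(2) by (simp_all add: bounded_linear.tendsto[OF blinfun.bounded_linear_right])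
  have "(\<lambda>n. T (x' n) + t n *\<^sub>R S (x' n)) \<longlonglongrightarrow> T x0 + 0 *\<^sub>R S x0"
    by (intro tendsto_intros Tx' Sx' t_0)
  then have y: "y \<longlonglongrightarrow> T x0"
    unfolding y_def by (simp add: plus_blinfun.rep_eq scaleR_blinfun.rep_eq)
  obtain h where h: "\<And>n. support_functional_on UNIV (y n) (h n)"
    using support_functional_sequence[of y] by metis
  have bound: "F S < h n (S (x' n)) + t n" for n
    using support_functional_perturbation_bound[OF F TK SK t(1) x'_unit x'_norming h[unfolded y_def]] .
  have "(\<lambda>n. h n (S x0)) \<longlonglongrightarrow> g (S x0)"
  proof (rule smooth_point_supports_converge[OF subspace_UNIV smooth _ y _ _ _ g])
    show "(\<lambda>n. h n (y n)) \<longlonglongrightarrow> norm (T x0)"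
      using tendsto_norm[OF y] h unfolding support_functional_on_def by simp
  qed (use h in \<open>auto simp: support_functional_on_iff\<close>)
  moreover have "(\<lambda>n. h n (S (x' n)) - h n (S x0)) \<longlonglongrightarrow> 0"
    by (rule support_functionals_diff_tendsto_zero[OF h Sx'])
  ultimately have "(\<lambda>n. h n (S x0) + (h n (S (x' n)) - h n (S x0)) + t n) \<longlonglongrightarrow> g (S x0) + 0 + 0"
    by (intro tendsto_intros t_0)
  then have "(\<lambda>n. h n (S (x' n)) + t n) \<longlonglongrightarrow> g (S x0)" by simp
  then show ?thesis using bound by (intro LIMSEQ_le_const) (auto intro: less_imp_le)
qed

lemma smooth_point_if_M_set_concentrates:
  fixes T :: "'a::real_normed_vector \<Rightarrow>\<^sub>L 'b::real_normed_vector"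
  assumes smooth: "smooth_space TYPE('b)" and TK: "T \<in> compact_ops" and T0: "T \<noteq> 0"
    and conc: "M_set_concentrates T x0"
  shows "smooth_point_in compact_ops T"
proof -
  have x0: "norm x0 = 1" "norm (T x0) = norm T"
    using M_set_concentrates_norm_attained[OF conc T0] by simp_all
  then have "T x0 \<noteq> 0" using T0 by auto
  then have smooth_Tx0: "smooth_point_in UNIV (T x0)" using smooth unfolding smooth_space_def by blast
  obtain g where g: "support_functional_on UNIV (T x0) g"
    using support_functional_exists[OF subspace_UNIV] by blast
  have F0: "support_functional_on compact_ops T (\<lambda>S. g (S x0))"
    by (rule support_functional_evaluation[OF x0 g])
  have "F S = g (S x0)" if F: "support_functional_on compact_ops T F" and SK: "S \<in> compact_ops" for F S
  proof -
    have "- S \<in> compact_ops" using subspace_compact_ops SK by (rule subspace_neg)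
    then have "F (- S) \<le> g ((- S) x0)"
      using support_functional_le_evaluation[OF conc T0 TK smooth_Tx0 g F] by blast
    moreover have "F (- S) = - F S"
      using F linear_on_minus[OF subspace_compact_ops _ SK] unfolding support_functional_on_iff by blast
    moreover have "g ((- S) x0) = - g (S x0)"
      using g linear_on_minus[OF subspace_UNIV, of g] unfolding support_functional_on_iff
      by (simp add: uminus_blinfun.rep_eq)
    ultimately show ?thesis
      using support_functional_le_evaluation[OF conc T0 TK smooth_Tx0 g F SK] by simp
  qed
  then show ?thesis unfolding smooth_point_in_def using TK T0 F0 by metis
qed

section \<open>Smoothness implies concentration of \<open>M_set\<close>\<close>

lemma weak_conv_norm_le:
  assumes "weak_conv x x0" and "\<And>n. norm (x n) \<le> B"
  shows "norm x0 \<le> B"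
proof -
  obtain h :: "'a \<Rightarrow>\<^sub>L real" where h: "h x0 = norm x0" "\<And>u. \<bar>h u\<bar> \<le> norm u"
    using norming_functional[of x0] by blast
  have "h (x n) \<le> B" for n using h(2)[of "x n"] assms(2)[of n] by linarith
  moreover have "(\<lambda>n. h (x n)) \<longlonglongrightarrow> h x0" using assms(1) unfolding weak_conv_def by blast
  ultimately have "h x0 \<le> B" by (intro LIMSEQ_le_const2) auto
  then show ?thesis using h(1) by simp
qed

lemma weak_conv_blinfun_limit:
  fixes T :: "'a::real_normed_vector \<Rightarrow>\<^sub>L 'b::real_normed_vector"
  assumes "weak_conv x x0" and "(\<lambda>n. blinfun_apply T (x n)) \<longlonglongrightarrow> y"
  shows "T x0 = y"
proof (rule blinfun_functionals_separate)
  fix h :: "'b \<Rightarrow>\<^sub>L real"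
  have "(\<lambda>n. blinfun_apply (h o\<^sub>L T) (x n)) \<longlonglongrightarrow> blinfun_apply (h o\<^sub>L T) x0" using assms(1) unfolding weak_conv_def by blast
  moreover have "(\<lambda>n. h (T (x n))) \<longlonglongrightarrow> h y"
    using assms(2) by (rule bounded_linear.tendsto[OF blinfun.bounded_linear_right])
  ultimately show "h (T x0) = h y" by (simp add: LIMSEQ_unique blinfun_compose.rep_eq)
qed

lemma reflexive_space_weak_limit:
  fixes x :: "nat \<Rightarrow> 'a::real_normed_vector" and \<Phi> :: "('a \<Rightarrow>\<^sub>L real) \<Rightarrow> real"
  assumes refl: "reflexive_space TYPE('a)" and bounded: "\<And>n. norm (x n) \<le> B"
    and conv: "\<And>\<phi>. (\<lambda>n. blinfun_apply \<phi> (x n)) \<longlonglongrightarrow> \<Phi> \<phi>"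
  obtains x0 where "weak_conv x x0"
proof -
  have "bounded_linear \<Phi>"
  proof (rule bounded_linear_intro[where K=B])
    fix \<phi> \<psi> :: "'a \<Rightarrow>\<^sub>L real"
    have "(\<lambda>n. (\<phi> + \<psi>) (x n)) \<longlonglongrightarrow> \<Phi> \<phi> + \<Phi> \<psi>"
      using tendsto_add[OF conv conv] by (simp add: plus_blinfun.rep_eq)
    then show "\<Phi> (\<phi> + \<psi>) = \<Phi> \<phi> + \<Phi> \<psi>" using conv LIMSEQ_unique by blast
  next
    fix c :: real and \<phi> :: "'a \<Rightarrow>\<^sub>L real"
    have "(\<lambda>n. (c *\<^sub>R \<phi>) (x n)) \<longlonglongrightarrow> c *\<^sub>R \<Phi> \<phi>"
      using tendsto_scaleR[OF tendsto_const conv] by (simp add: scaleR_blinfun.rep_eq)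
    then show "\<Phi> (c *\<^sub>R \<phi>) = c *\<^sub>R \<Phi> \<phi>" using conv LIMSEQ_unique by blast
  next
    fix \<phi> :: "'a \<Rightarrow>\<^sub>L real"
    have "norm (\<phi> (x n)) \<le> norm \<phi> * B" for n
      using norm_blinfun[of \<phi> "x n"] bounded[of n] norm_ge_zero[of \<phi>]
      by (meson mult_left_mono order_trans)
    then show "norm (\<Phi> \<phi>) \<le> norm \<phi> * B"
      using tendsto_norm[OF conv[of \<phi>]] by (intro LIMSEQ_le_const2) auto
  qed
  moreover obtain x0 where "\<forall>\<phi>. blinfun_apply (Blinfun \<Phi>) \<phi> = \<phi> x0"
    using refl unfolding reflexive_space_def by blast
  ultimately have "\<Phi> \<phi> = \<phi> x0" for \<phi> by (simp add: bounded_linear_Blinfun_apply)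
  then show thesis using conv that unfolding weak_conv_def by metis
qed

text \<open>At a smooth T the functionals \<open>S \<mapsto> g\<^sub>n (S x\<^sub>n)\<close>, with \<open>g\<^sub>n\<close> supporting \<open>T x\<^sub>n\<close>,
  approximately support T, hence converge to its unique support functional.\<close>
lemma support_functionals_at_maximizing_converge:
  fixes T :: "'a::real_normed_vector \<Rightarrow>\<^sub>L 'b::real_normed_vector"
  assumes smooth: "smooth_point_in compact_ops T" and TK: "T \<in> compact_ops"
    and x: "\<And>n. norm (x n) = 1" and Tx: "(\<lambda>n. norm (T (x n))) \<longlonglongrightarrow> norm T"
    and g: "\<And>n. support_functional_on UNIV (T (x n)) (g n)"
    and F0: "support_functional_on compact_ops T F0" and SK: "S \<in> compact_ops"
  shows "(\<lambda>n. g n (S (x n))) \<longlonglongrightarrow> F0 S"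
proof (rule smooth_point_supports_converge[OF subspace_compact_ops smooth, where y="\<lambda>_. T"])
  show "\<forall>n. linear_on compact_ops (\<lambda>S. g n (blinfun_apply S (x n)))"
    using g unfolding linear_on_def support_functional_on_def
    by (simp add: plus_blinfun.rep_eq scaleR_blinfun.rep_eq)
  show "\<forall>n. \<forall>S\<in>compact_ops. \<bar>g n (blinfun_apply S (x n))\<bar> \<le> norm S"
    using g norm_blinfun_unit_le[OF x] unfolding support_functional_on_def
    by (meson UNIV_I order_trans)
  show "(\<lambda>n. g n (T (x n))) \<longlonglongrightarrow> norm T"
    using Tx g unfolding support_functional_on_def by simp
qed (use TK F0 SK in auto)

lemma smooth_point_maximizing_evaluations_converge:
  fixes T :: "'a::real_normed_vector \<Rightarrow>\<^sub>L 'b::real_normed_vector"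
  assumes smooth: "smooth_point_in compact_ops T" and TK: "T \<in> compact_ops" and T0: "T \<noteq> 0"
    and x: "\<And>n. norm (x n) = 1" and Tx: "(\<lambda>n. norm (T (x n))) \<longlonglongrightarrow> norm T"
    and y: "(\<lambda>n. T (x n)) \<longlonglongrightarrow> y"
    and F0: "support_functional_on compact_ops T F0"
  shows "(\<lambda>n. blinfun_apply \<phi> (x n)) \<longlonglongrightarrow> F0 (rank_one \<phi> y) / norm T"
proof -
  obtain g where g: "\<And>n. support_functional_on UNIV (T (x n)) (g n)"
    using support_functional_sequence[of "\<lambda>n. T (x n)"] by metis
  have "(\<lambda>n. g n (rank_one \<phi> y (x n))) \<longlonglongrightarrow> F0 (rank_one \<phi> y)"
    by (rule support_functionals_at_maximizing_converge[OF smooth TK x Tx g F0 rank_one_compact])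
  moreover have "g n (rank_one \<phi> y (x n)) = \<phi> (x n) * g n y" for n
    using g unfolding support_functional_on_def by simp
  ultimately have num: "(\<lambda>n. \<phi> (x n) * g n y) \<longlonglongrightarrow> F0 (rank_one \<phi> y)" by simp
  have "(\<lambda>n. norm (T (x n)) - (g n (T (x n)) - g n y)) \<longlonglongrightarrow> norm T - 0"
    using Tx support_functionals_diff_tendsto_zero[OF g y] by (rule tendsto_diff)
  then have den: "(\<lambda>n. g n y) \<longlonglongrightarrow> norm T" using g unfolding support_functional_on_def by simp
  have "norm T \<noteq> 0" using T0 by simp
  then have "(\<lambda>n. \<phi> (x n) * g n y / g n y) \<longlonglongrightarrow> F0 (rank_one \<phi> y) / norm T"
    by (rule tendsto_divide[OF num den])
  moreover have "\<forall>\<^sub>F n in sequentially. 0 < g n y" using order_tendstoD(1)[OF den] T0 by simp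
  then have "\<forall>\<^sub>F n in sequentially. \<phi> (x n) * g n y / g n y = \<phi> (x n)"
    by (rule eventually_mono) simp
  ultimately show ?thesis by (rule Lim_transform_eventually)
qed

text \<open>Compactness of T gives a subsequence with \<open>T x\<^sub>n \<rightarrow> y\<close>; smoothness makes every functional
  converge along it, reflexivity turns these limits into a weak limit \<open>x0\<close> with \<open>T x0 = y\<close>,
  and \<open>norm x0 = 1\<close> lets the Kadets-Klee property upgrade weak to norm convergence.\<close>
lemma smooth_point_maximizing_subseq_converges:
  fixes T :: "'a::real_normed_vector \<Rightarrow>\<^sub>L 'b::real_normed_vector"
  assumes refl: "reflexive_space TYPE('a)" and kk: "kadets_klee TYPE('a)"
    and smooth: "smooth_point_in compact_ops T" and TK: "T \<in> compact_ops" and T0: "T \<noteq> 0"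
    and x: "\<And>n. norm (x n) = 1" and Tx: "(\<lambda>n. norm (T (x n))) \<longlonglongrightarrow> norm T"
  obtains r x0 where "strict_mono r" "norm x0 = 1" "norm (T x0) = norm T" "(x \<circ> r) \<longlonglongrightarrow> x0"
proof -
  have "\<exists>F0. support_functional_on compact_ops T F0" using smooth by (simp add: smooth_point_in_def)
  then obtain F0 where F0: "support_functional_on compact_ops T F0" by blast
  have compact: "compact (closure (T ` cball 0 1))" using TK unfolding compact_ops_def by (rule CollectD)
  have bounded: "\<forall>n. T (x n) \<in> closure (T ` cball 0 1)"
  proof
    fix n
    have "x n \<in> cball 0 1" using x[of n] by simp
    then show "T (x n) \<in> closure (T ` cball 0 1)" by (intro closure_subset[THEN subsetD] imageI)
  qed
  obtain y r where r: "strict_mono r" and "((\<lambda>n. T (x n)) \<circ> r) \<longlonglongrightarrow> y"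
    using seq_compactE[OF compact_imp_seq_compact[OF compact] bounded] by blast
  then have y: "(\<lambda>n. T ((x \<circ> r) n)) \<longlonglongrightarrow> y" by (simp add: o_def)
  have xr: "\<And>n. norm ((x \<circ> r) n) = 1" using x by simp
  have Txr: "(\<lambda>n. norm (T ((x \<circ> r) n))) \<longlonglongrightarrow> norm T"
    using LIMSEQ_subseq_LIMSEQ[OF Tx r] by (simp add: o_def)
  have evals: "(\<lambda>n. blinfun_apply \<phi> ((x \<circ> r) n)) \<longlonglongrightarrow> F0 (rank_one \<phi> y) / norm T" for \<phi>
    by (rule smooth_point_maximizing_evaluations_converge[OF smooth TK T0 xr Txr y F0])
  have "\<And>n. norm ((x \<circ> r) n) \<le> 1" using xr by simp
  then obtain x0 where weak: "weak_conv (x \<circ> r) x0"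
    using reflexive_space_weak_limit[OF refl _ evals] by blast
  have Tx0: "T x0 = y" using weak_conv_blinfun_limit[OF weak y] .
  have norm_y: "norm y = norm T" using LIMSEQ_unique[OF tendsto_norm[OF y] Txr] .
  have "norm T * 1 \<le> norm T * norm x0"
    using norm_blinfun[of T x0] Tx0 norm_y by simp
  then have "1 \<le> norm x0" using T0 by simp
  moreover have "norm x0 \<le> 1" using weak_conv_norm_le[OF weak] xr by simp
  ultimately have x0: "norm x0 = 1" "norm (T x0) = norm T" using Tx0 norm_y by simp_all
  have "(\<lambda>n. norm ((x \<circ> r) n)) \<longlonglongrightarrow> norm x0" using xr x0(1) by simp
  then have "(\<lambda>n. norm ((x \<circ> r) n - x0)) \<longlonglongrightarrow> 0"
    using kk weak unfolding kadets_klee_def by blast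
  then have "(x \<circ> r) \<longlonglongrightarrow> x0" by (simp add: LIM_zero_cancel tendsto_norm_zero_iff)
  then show thesis using that r x0 by blast
qed

text \<open>The norm-one functionals \<open>S \<mapsto> g\<^sub>i (S x\<^sub>i)\<close> both support T, so they coincide; testing
  them on the rank-one operators \<open>\<phi> \<otimes> T x0\<close> shows that \<open>x0\<close> and \<open>x1\<close> are proportional.\<close>
lemma smooth_point_norming_vectors_unique:
  fixes T :: "'a::real_normed_vector \<Rightarrow>\<^sub>L 'b::real_normed_vector"
  assumes T0: "T \<noteq> 0" and smooth: "smooth_point_in compact_ops T"
    and x0: "norm x0 = 1" "norm (T x0) = norm T" and x1: "norm x1 = 1" "norm (T x1) = norm T"
  shows "x1 = x0 \<or> x1 = - x0"
proof -
  obtain g0 where g0: "support_functional_on UNIV (T x0) g0"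
    using support_functional_exists[OF subspace_UNIV] by blast
  obtain g1 where g1: "support_functional_on UNIV (T x1) g1"
    using support_functional_exists[OF subspace_UNIV] by blast
  have "g0 (S x0) = g1 (S x1)" if "S \<in> compact_ops" for S
    using smooth that support_functional_evaluation[OF x0 g0] support_functional_evaluation[OF x1 g1]
    unfolding smooth_point_in_def by blast
  define c where "c = g1 (T x0) / norm T"
  have "h x0 = h (c *\<^sub>R x1)" for h :: "'a \<Rightarrow>\<^sub>L real"
  proof -
    have "g0 (rank_one h (T x0) x0) = g1 (rank_one h (T x0) x1)"
      using \<open>\<And>S. S \<in> compact_ops \<Longrightarrow> g0 (S x0) = g1 (S x1)\<close> rank_one_compact by blast
    then have "h x0 * norm T = h x1 * g1 (T x0)"
      using g0 g1 x0(2) unfolding support_functional_on_def by simp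
    then show ?thesis using T0 unfolding c_def by (simp add: blinfun.scaleR_right field_simps)
  qed
  then have "x0 = c *\<^sub>R x1" by (rule blinfun_functionals_separate)
  have "\<bar>c\<bar> = 1" using \<open>x0 = c *\<^sub>R x1\<close> x0(1) x1(1) by simp
  then have "c = 1 \<or> c = - 1" by linarith
  then show ?thesis using \<open>x0 = c *\<^sub>R x1\<close> by auto
qed

lemma not_M_set_concentrates_sequence:
  fixes T :: "'a::real_normed_vector \<Rightarrow>\<^sub>L 'b::real_normed_vector"
  assumes "\<not> (\<exists>d>0. \<forall>\<delta>. 0 < \<delta> \<and> \<delta> \<le> d \<and> \<delta> < norm T \<longrightarrow> M_set T \<delta> \<subseteq> B)"
  obtains z where "\<And>n. norm (z n) = 1" "\<And>n. norm T - inverse (real (Suc n)) < norm (T (z n))"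
    "\<And>n. z n \<notin> B"
proof -
  have "\<exists>z. norm z = 1 \<and> norm T - inverse (real (Suc n)) < norm (T z) \<and> z \<notin> B" for n
  proof -
    have "0 < inverse (real (Suc n))" by simp
    then obtain \<delta> where \<delta>: "0 < \<delta>" "\<delta> \<le> inverse (real (Suc n))" "\<delta> < norm T"
      and "\<not> M_set T \<delta> \<subseteq> B"
      using assms by blast
    then obtain z where z: "z \<in> M_set T \<delta>" "z \<notin> B" by blast
    then have "norm z = 1" "norm T - inverse (real (Suc n)) < norm (T z)"
      using \<delta>(2) unfolding M_set_def by auto
    then show ?thesis using z(2) by blast
  qed
  then show thesis using that by metis
qed

lemma M_set_concentrates_if_smooth_point:
  fixes T :: "'a::real_normed_vector \<Rightarrow>\<^sub>L 'b::real_normed_vector"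
  assumes refl: "reflexive_space TYPE('a)" and kk: "kadets_klee TYPE('a)"
    and TK: "T \<in> compact_ops" and T0: "T \<noteq> 0" and smooth: "smooth_point_in compact_ops T"
  obtains x0 where "norm x0 = 1" "M_set_concentrates T x0"
proof -
  obtain v where "T v \<noteq> 0" using T0 by (metis blinfun_eqI zero_blinfun.rep_eq)
  then have "v \<noteq> 0" by auto
  have inv: "(\<lambda>n. inverse (real (Suc n))) \<longlonglongrightarrow> 0" by (rule LIMSEQ_inverse_real_of_nat)
  obtain x where x: "\<And>n. norm (x n) = 1" "\<And>n. norm T - inverse (real (Suc n)) < norm (T (x n))"
    using almost_norming_sequence[OF \<open>v \<noteq> 0\<close>, of "\<lambda>n. inverse (real (Suc n))" "\<lambda>_. T"] by auto
  obtain x0 where x0: "norm x0 = 1" "norm (T x0) = norm T"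
    using smooth_point_maximizing_subseq_converges[OF refl kk smooth TK T0 x(1)
        norm_tendsto_of_almost_norming[OF x inv]] by blast
  have "M_set_concentrates T x0"
    unfolding M_set_concentrates_def
  proof (intro allI impI, rule ccontr)
    fix e :: real assume "e > 0"
    assume not_conc: "\<not> (\<exists>d>0. \<forall>\<delta>. 0 < \<delta> \<and> \<delta> \<le> d \<and> \<delta> < norm T \<longrightarrow>
      M_set T \<delta> \<subseteq> ball x0 e \<union> ball (- x0) e)"
    obtain z where z: "\<And>n. norm (z n) = 1" "\<And>n. norm T - inverse (real (Suc n)) < norm (T (z n))"
      "\<And>n. z n \<notin> ball x0 e \<union> ball (- x0) e"
      using not_M_set_concentrates_sequence[OF not_conc] by blast
    obtain r x1 where r: "norm x1 = 1" "norm (T x1) = norm T" "(z \<circ> r) \<longlonglongrightarrow> x1"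
      using smooth_point_maximizing_subseq_converges[OF refl kk smooth TK T0 z(1)
          norm_tendsto_of_almost_norming[OF z(1,2) inv]] by blast
    have "\<forall>\<^sub>F n in sequentially. dist ((z \<circ> r) n) x1 < e" using r(3) \<open>e > 0\<close> by (rule tendstoD)
    then obtain n where "dist (z (r n)) x1 < e" by (auto simp: eventually_sequentially)
    moreover have "x1 = x0 \<or> x1 = - x0"
      by (rule smooth_point_norming_vectors_unique[OF T0 smooth x0 r(1,2)])
    ultimately show False using z(3)[of "r n"] by (auto simp: dist_commute)
  qed
  then show thesis using that x0(1) by blast
qed

theorem theorem2p3:
  fixes T :: "'a::banach \<Rightarrow>\<^sub>L 'b::banach"
  assumes "reflexive_space TYPE('a)"
    and "smooth_space TYPE('b)"
    and "dim_gt_one TYPE('a)" and "dim_gt_one TYPE('b)"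
    and "T \<in> compact_ops" and "T \<noteq> 0"
  shows "(kadets_klee TYPE('a) \<longrightarrow>
            (smooth_point_in compact_ops T \<longleftrightarrow>
              (\<exists>x0. norm x0 = 1 \<and> (\<forall>\<epsilon>>0. \<exists>d>0. \<forall>\<delta>. 0 < \<delta> \<and> \<delta> \<le> d \<and> \<delta> < norm T \<longrightarrow>
                  M_set T \<delta> \<subseteq> ball x0 \<epsilon> \<union> ball (- x0) \<epsilon>))))
       \<and> ((\<exists>x0. norm x0 = 1 \<and> (\<forall>\<epsilon>>0. \<exists>d>0. \<forall>\<delta>. 0 < \<delta> \<and> \<delta> \<le> d \<and> \<delta> < norm T \<longrightarrow>
                  M_set T \<delta> \<subseteq> ball x0 \<epsilon> \<union> ball (- x0) \<epsilon>))
            \<longrightarrow> smooth_point_in compact_ops T)"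
proof -
  have "(\<exists>x0. norm x0 = 1 \<and> M_set_concentrates T x0) \<longrightarrow> smooth_point_in compact_ops T"
    using smooth_point_if_M_set_concentrates[OF assms(2,5,6)] by blast
  moreover have "kadets_klee TYPE('a) \<longrightarrow> smooth_point_in compact_ops T \<longrightarrow>
      (\<exists>x0. norm x0 = 1 \<and> M_set_concentrates T x0)"
    using M_set_concentrates_if_smooth_point[OF assms(1) _ assms(5,6)] by blast
  ultimately show ?thesis unfolding M_set_concentrates_def by blast
qed

end
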